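(* Consider any instance of the rescheduling problem $(1, h_1 \mid \Delta_{\max}\le k \mid \mu\Delta_{\max} + \sum_{j=1}^n w_j C_j)$ described in the context, and let $\sigma^*$ be an optimal schedule with the following properties: the jobs of its earlier schedule are processed in increasing index order; the jobs of its later schedule are processed in increasing index order; $C_j(\sigma^* )\le C_j(\pi^* )$ for every earlier-schedule job; the earlier schedule has at most one idle period; every earlier-schedule job processed after the idle period satisfies $C_j(\pi^* )-C_j(\sigma^* )=\Delta_{\max}(\sigma^* )$; those jobs have consecutive indices; the first of them, $J_j$, satisfies $S_j(\pi^* )\ge T_2$; the machine does not idle in the later schedule; and the first job of the later schedule has maximum time deviation among later-schedule jobs. Suppose $J_a$ is the first job in the later schedule of $\sigma^*$. Then for every index $j>a$ with $S_j(\pi^* )<T_2$, if $J_j$ is in the earlier schedule of $\sigma^*$ then $\Delta_j<\Delta_a$.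
   Context: An instance consists of $n$ jobs $J_1,\dots,J_n$, where $J_j$ has a positive integer processing time $p_j$ and positive integer weight $w_j$, indexed so that $p_1/w_1\le\cdots\le p_n/w_n$; integers $0\le T_1<T_2$ (machine unavailable during $[T_1,T_2]$); an integer $k$; a rational $\mu\ge0$. The original schedule $\pi^*$ processes $J_1,\dots,J_n$ in order consecutively from time $0$ without idling, so $S_j(\pi^* )=\sum_{i<j}p_i$, $C_j(\pi^* )=\sum_{i\le j}p_i$. A schedule $\sigma$ gives start times $S_j(\sigma)\ge0$, non-preemptive single-machine processing, $C_j(\sigma)=S_j(\sigma)+p_j$, no overlaps, and each job has $C_j(\sigma)\le T_1$ or $S_j(\sigma)\ge T_2$. $\Delta_j=|C_j(\sigma)-C_j(\pi^* )|$ (for $\sigma=\sigma^*$), $\Delta_{\max}=\max_j\Delta_j$. Feasible means $\Delta_{\max}\le k$; optimal means feasible minimizing $\mu\Delta_{\max}+\sum_j w_jC_j(\sigma)$. The earlier schedule consists of jobs with $C_j(\sigma)\le T_1$; the later schedule of jobs completed after $T_2$. An idle period of the earlier schedule is a maximal interval of positive length within $[0,c]$ ($c$ the largest completion time of an earlier job) with no processing; the machine idles in the later schedule if some positive-length interval within $[T_2,c']$ ($c'$ the largest completion time of a later job) has no processing. Standing assumptions: some job has $C_j(\pi^* )>T_1$; with $j_1$ the smallest such index, $\min_jp_j\le T_1<\sum_jp_j$ and $T_2-S_{j_1}(\pi^* )\le k$. *)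

theory Defs
  imports Complex_Main
begin

text \<open>Jobs are indexed 1..n. Processing times p, weights w :: nat => nat.
  Schedules are given by real start times S :: nat => real.\<close>

definition Sorig :: "(nat \<Rightarrow> nat) \<Rightarrow> nat \<Rightarrow> nat" where
  "Sorig p j = (\<Sum>i\<in>{1..<j}. p i)"

definition Corig :: "(nat \<Rightarrow> nat) \<Rightarrow> nat \<Rightarrow> nat" where
  "Corig p j = (\<Sum>i\<in>{1..j}. p i)"

definition Cmp :: "(nat \<Rightarrow> nat) \<Rightarrow> (nat \<Rightarrow> real) \<Rightarrow> nat \<Rightarrow> real" where
  "Cmp p S j = S j + real (p j)"

definition valid_instance ::
  "nat \<Rightarrow> (nat \<Rightarrow> nat) \<Rightarrow> (nat \<Rightarrow> nat) \<Rightarrow> nat \<Rightarrow> nat \<Rightarrow> int \<Rightarrow> real \<Rightarrow> bool" where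
  "valid_instance n p w T1 T2 k \<mu> \<longleftrightarrow>
     (\<forall>j\<in>{1..n}. p j > 0 \<and> w j > 0) \<and>
     (\<forall>i j. 1 \<le> i \<and> i \<le> j \<and> j \<le> n \<longrightarrow> real (p i) / real (w i) \<le> real (p j) / real (w j)) \<and>
     T1 < T2 \<and> \<mu> \<in> \<rat> \<and> \<mu> \<ge> 0 \<and>
     (\<exists>j\<in>{1..n}. Corig p j > T1) \<and>
     Min (p ` {1..n}) \<le> T1 \<and> T1 < (\<Sum>j\<in>{1..n}. p j) \<and>
     int T2 - int (Sorig p (LEAST j. j \<in> {1..n} \<and> Corig p j > T1)) \<le> k"

definition is_schedule :: "nat \<Rightarrow> (nat \<Rightarrow> nat) \<Rightarrow> nat \<Rightarrow> nat \<Rightarrow> (nat \<Rightarrow> real) \<Rightarrow> bool" where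
  "is_schedule n p T1 T2 S \<longleftrightarrow>
     (\<forall>j\<in>{1..n}. S j \<ge> 0) \<and>
     (\<forall>i\<in>{1..n}. \<forall>j\<in>{1..n}. i \<noteq> j \<longrightarrow> Cmp p S i \<le> S j \<or> Cmp p S j \<le> S i) \<and>
     (\<forall>j\<in>{1..n}. Cmp p S j \<le> real T1 \<or> S j \<ge> real T2)"

definition Delta :: "(nat \<Rightarrow> nat) \<Rightarrow> (nat \<Rightarrow> real) \<Rightarrow> nat \<Rightarrow> real" where
  "Delta p S j = \<bar>Cmp p S j - real (Corig p j)\<bar>"

definition Dmax :: "nat \<Rightarrow> (nat \<Rightarrow> nat) \<Rightarrow> (nat \<Rightarrow> real) \<Rightarrow> real" where
  "Dmax n p S = Max (Delta p S ` {1..n})"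

definition feasible :: "nat \<Rightarrow> (nat \<Rightarrow> nat) \<Rightarrow> nat \<Rightarrow> nat \<Rightarrow> int \<Rightarrow> (nat \<Rightarrow> real) \<Rightarrow> bool" where
  "feasible n p T1 T2 k S \<longleftrightarrow> is_schedule n p T1 T2 S \<and> Dmax n p S \<le> real_of_int k"

definition cost :: "nat \<Rightarrow> (nat \<Rightarrow> nat) \<Rightarrow> (nat \<Rightarrow> nat) \<Rightarrow> real \<Rightarrow> (nat \<Rightarrow> real) \<Rightarrow> real" where
  "cost n p w \<mu> S = \<mu> * Dmax n p S + (\<Sum>j\<in>{1..n}. real (w j) * Cmp p S j)"

definition optimal ::
  "nat \<Rightarrow> (nat \<Rightarrow> nat) \<Rightarrow> (nat \<Rightarrow> nat) \<Rightarrow> nat \<Rightarrow> nat \<Rightarrow> int \<Rightarrow> real \<Rightarrow> (nat \<Rightarrow> real) \<Rightarrow> bool" where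
  "optimal n p w T1 T2 k \<mu> S \<longleftrightarrow> feasible n p T1 T2 k S \<and>
     (\<forall>S'. feasible n p T1 T2 k S' \<longrightarrow> cost n p w \<mu> S \<le> cost n p w \<mu> S')"

definition earlier :: "nat \<Rightarrow> (nat \<Rightarrow> nat) \<Rightarrow> nat \<Rightarrow> (nat \<Rightarrow> real) \<Rightarrow> nat set" where
  "earlier n p T1 S = {j\<in>{1..n}. Cmp p S j \<le> real T1}"

definition later :: "nat \<Rightarrow> (nat \<Rightarrow> nat) \<Rightarrow> nat \<Rightarrow> (nat \<Rightarrow> real) \<Rightarrow> nat set" where
  "later n p T1 S = {j\<in>{1..n}. \<not> Cmp p S j \<le> real T1}"

definition no_processing :: "(nat \<Rightarrow> nat) \<Rightarrow> (nat \<Rightarrow> real) \<Rightarrow> nat set \<Rightarrow> real \<Rightarrow> real \<Rightarrow> bool" where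
  "no_processing p S A a b \<longleftrightarrow> (\<forall>j\<in>A. {S j<..<Cmp p S j} \<inter> {a<..<b} = {})"

definition idle_period ::
  "(nat \<Rightarrow> nat) \<Rightarrow> (nat \<Rightarrow> real) \<Rightarrow> nat set \<Rightarrow> real \<Rightarrow> real \<Rightarrow> real \<Rightarrow> real \<Rightarrow> bool" where
  "idle_period p S A lo c a b \<longleftrightarrow> lo \<le> a \<and> a < b \<and> b \<le> c \<and> no_processing p S A a b \<and>
     (\<forall>a' b'. lo \<le> a' \<and> a' \<le> a \<and> b \<le> b' \<and> b' \<le> c \<and> no_processing p S A a' b' \<longrightarrow> a' = a \<and> b' = b)"

definition last_completion :: "(nat \<Rightarrow> nat) \<Rightarrow> (nat \<Rightarrow> real) \<Rightarrow> nat set \<Rightarrow> real" where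
  "last_completion p S A = Max (Cmp p S ` A)"

end

theory Submission
  imports Defs
begin

text \<open>An earlier job J_j with C_j(\<sigma>) \<le> C_j(\<pi>) deviates by S_j(\<pi>) - S_j(\<sigma>). Before J_j the earlier
  schedule contains every earlier job of smaller index, so \<Delta>_j is at most the total processing
  time of the later jobs of smaller index. These all have index at least a, hence
  \<Delta>_j \<le> S_j(\<pi>) - S_a(\<pi>) < T_2 - S_a(\<pi>) \<le> S_a(\<sigma>) - S_a(\<pi>) = \<Delta>_a.\<close>

definition non_overlapping :: "('a \<Rightarrow> real) \<Rightarrow> ('a \<Rightarrow> real) \<Rightarrow> 'a set \<Rightarrow> bool" where
  "non_overlapping S d A \<longleftrightarrow>
     (\<forall>i\<in>A. \<forall>l\<in>A. i \<noteq> l \<longrightarrow> S i + d i \<le> S l \<or> S l + d l \<le> S i)"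

lemma non_overlapping_subset:
  "non_overlapping S d A \<Longrightarrow> B \<subseteq> A \<Longrightarrow> non_overlapping S d B"
  unfolding non_overlapping_def by blast

lemma non_overlapping_completes_before:
  assumes "non_overlapping S d A" "i \<in> A" "l \<in> A" "S i < S l" "d l \<ge> 0"
  shows "S i + d i \<le> S l"
proof -
  have "i \<noteq> l" using assms(4) by auto
  then show ?thesis using assms unfolding non_overlapping_def by fastforce
qed

lemma non_overlapping_sum_le_start:
  fixes S d :: "'a \<Rightarrow> real"
  assumes "finite B" "j \<notin> B" "non_overlapping S d (insert j B)"
    and "\<forall>i\<in>insert j B. S i \<ge> 0 \<and> d i > 0" "\<forall>i\<in>B. S i < S j"
  shows "(\<Sum>i\<in>B. d i) \<le> S j"
  using assms
proof (induction B arbitrary: j rule: finite_psubset_induct)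
  case (psubset B)
  show ?case
  proof (cases "B = {}")
    case True
    then show ?thesis using psubset.prems by simp
  next
    case False
    have "Max (S ` B) \<in> S ` B" using False psubset.hyps by simp
    then obtain m where m: "m \<in> B" "S m = Max (S ` B)" by auto
    have m_max: "\<forall>i\<in>B. S i \<le> S m" using m psubset.hyps by simp
    have overlap_B: "non_overlapping S d (insert m (B - {m}))"
      using psubset.prems(2) m by (auto intro: non_overlapping_subset)
    have "(\<Sum>i\<in>B - {m}. d i) \<le> S m"
    proof (rule psubset.IH)
      show "B - {m} \<subset> B" "m \<notin> B - {m}" using m by auto
      show "non_overlapping S d (insert m (B - {m}))" by (fact overlap_B)
      show "\<forall>i\<in>insert m (B - {m}). S i \<ge> 0 \<and> d i > 0" using psubset.prems(3) m by auto
      show "\<forall>i\<in>B - {m}. S i < S m"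
      proof
        fix i assume i: "i \<in> B - {m}"
        have "S i + d i \<le> S m \<or> S m + d m \<le> S i"
          using overlap_B i unfolding non_overlapping_def by auto
        moreover have "d i > 0" "d m > 0" "S i \<le> S m" using psubset.prems(3) i m m_max by auto
        ultimately show "S i < S m" by linarith
      qed
    qed
    moreover have "S m + d m \<le> S j"
    proof (rule non_overlapping_completes_before[OF psubset.prems(2)])
      show "m \<in> insert j B" "j \<in> insert j B" using m by auto
      show "S m < S j" "d j \<ge> 0" using m psubset.prems(3,4) by auto
    qed
    moreover have "(\<Sum>i\<in>B. d i) = d m + (\<Sum>i\<in>B - {m}. d i)"
      using m psubset.hyps by (simp add: sum.remove)
    ultimately show ?thesis by linarith
  qed
qed

lemma is_schedule_non_overlapping:
  "is_schedule n p T1 T2 S \<Longrightarrow> non_overlapping S (\<lambda>i. real (p i)) {1..n}"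
  unfolding is_schedule_def non_overlapping_def Cmp_def by blast

lemma Corig_eq_Sorig_add:
  "1 \<le> j \<Longrightarrow> Corig p j = Sorig p j + p j"
  unfolding Corig_def Sorig_def by (simp add: atLeastLessThanSuc_atLeastAtMost[symmetric])

lemma Sorig_split:
  assumes "1 \<le> a" "a \<le> j"
  shows "Sorig p j = Sorig p a + sum p {a..<j}"
proof -
  have "{1..<j} = {1..<a} \<union> {a..<j}" using assms by auto
  then show ?thesis unfolding Sorig_def by (simp add: sum.union_disjoint)
qed

lemma Delta_ge_start_shift:
  "1 \<le> a \<Longrightarrow> S a - real (Sorig p a) \<le> Delta p S a"
  unfolding Delta_def Cmp_def by (simp add: Corig_eq_Sorig_add)

lemma Delta_earlier_le_sum_later_before:
  assumes sched: "is_schedule n p T1 T2 S" and pos: "\<forall>i\<in>{1..n}. p i > 0"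
    and j: "j \<in> earlier n p T1 S" and early: "Cmp p S j \<le> real (Corig p j)"
    and order: "\<forall>i\<in>earlier n p T1 S. i < j \<longrightarrow> S i < S j"
  shows "Delta p S j \<le> real (\<Sum>i\<in>{i\<in>later n p T1 S. i < j}. p i)"
proof -
  define B where "B = {i\<in>earlier n p T1 S. i < j}"
  define C where "C = {i\<in>later n p T1 S. i < j}"
  have j_range: "1 \<le> j" "j \<le> n" using j unfolding earlier_def by auto
  have "{1..<j} = B \<union> C" "B \<inter> C = {}"
    using j_range unfolding B_def C_def earlier_def later_def by auto
  then have Sorig_j: "Sorig p j = sum p B + sum p C"
    unfolding Sorig_def B_def C_def by (simp add: sum.union_disjoint)
  have B_jobs: "insert j B \<subseteq> {1..n}" using j unfolding B_def earlier_def by auto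
  have "(\<Sum>i\<in>B. real (p i)) \<le> S j"
  proof (rule non_overlapping_sum_le_start)
    show "non_overlapping S (\<lambda>i. real (p i)) (insert j B)"
      using is_schedule_non_overlapping[OF sched] B_jobs by (rule non_overlapping_subset)
    show "\<forall>i\<in>insert j B. S i \<ge> 0 \<and> real (p i) > 0"
      using sched B_jobs pos unfolding is_schedule_def by auto
  qed (use order in \<open>auto simp: B_def\<close>)
  moreover have "Delta p S j = real (Sorig p j) - S j"
    using early j_range unfolding Delta_def Cmp_def by (simp add: Corig_eq_Sorig_add)
  ultimately show ?thesis using Sorig_j unfolding C_def by simp
qed

theorem corollary3:
  fixes n T1 T2 :: nat and p w :: "nat \<Rightarrow> nat" and k :: int and \<mu> :: real
    and S :: "nat \<Rightarrow> real" and a :: nat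
  defines "E \<equiv> earlier n p T1 S" and "L \<equiv> later n p T1 S"
  assumes inst: "valid_instance n p w T1 T2 k \<mu>"
    and opt: "optimal n p w T1 T2 k \<mu> S"
    and E_order: "\<forall>i\<in>E. \<forall>j\<in>E. i < j \<longrightarrow> S i < S j"
    and L_order: "\<forall>i\<in>L. \<forall>j\<in>L. i < j \<longrightarrow> S i < S j"
    and E_early: "\<forall>j\<in>E. Cmp p S j \<le> real (Corig p j)"
    and one_idle: "E \<noteq> {} \<longrightarrow> (\<forall>a1 b1 a2 b2.
        idle_period p S E 0 (last_completion p S E) a1 b1 \<and>
        idle_period p S E 0 (last_completion p S E) a2 b2 \<longrightarrow> a1 = a2 \<and> b1 = b2)"
    and after_idle: "E \<noteq> {} \<longrightarrow> (\<forall>a1 b1.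
        idle_period p S E 0 (last_completion p S E) a1 b1 \<longrightarrow>
          (\<forall>j\<in>E. S j \<ge> b1 \<longrightarrow> real (Corig p j) - Cmp p S j = Dmax n p S) \<and>
          (\<forall>i\<in>E. \<forall>j\<in>E. \<forall>l. S i \<ge> b1 \<and> S j \<ge> b1 \<and> i \<le> l \<and> l \<le> j \<longrightarrow> l \<in> E \<and> S l \<ge> b1) \<and>
          (\<forall>j\<in>E. S j \<ge> b1 \<and> (\<forall>i\<in>E. S i \<ge> b1 \<longrightarrow> j \<le> i) \<longrightarrow> Sorig p j \<ge> T2))"
    and L_no_idle: "L \<noteq> {} \<longrightarrow> \<not> (\<exists>a1 b1. real T2 \<le> a1 \<and> a1 < b1 \<and> b1 \<le> last_completion p S L
        \<and> no_processing p S L a1 b1)"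
    and L_first_max: "\<forall>i\<in>L. (\<forall>j\<in>L. S i \<le> S j) \<longrightarrow> (\<forall>j\<in>L. Delta p S j \<le> Delta p S i)"
    and a_first: "a \<in> L" "\<forall>j\<in>L. S a \<le> S j"
  shows "\<forall>j\<in>{1..n}. j > a \<and> Sorig p j < T2 \<and> j \<in> E \<longrightarrow> Delta p S j < Delta p S a"
proof (intro ballI impI)
  fix j assume "j \<in> {1..n}" and j: "a < j \<and> Sorig p j < T2 \<and> j \<in> E"
  have sched: "is_schedule n p T1 T2 S" using opt unfolding optimal_def feasible_def by simp
  have pos: "\<forall>i\<in>{1..n}. p i > 0" using inst unfolding valid_instance_def by simp
  have a_job: "1 \<le> a" "S a \<ge> real T2"
    using a_first(1) sched unfolding L_def later_def is_schedule_def by auto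
  have "a \<le> i" if "i \<in> L" for i
    using L_order a_first that by (meson linorder_not_le not_less)
  then have "{i\<in>L. i < j} \<subseteq> {a..<j}" by auto
  then have "sum p {i\<in>L. i < j} \<le> sum p {a..<j}" by (simp add: sum_mono2)
  moreover have "Delta p S j \<le> real (sum p {i\<in>L. i < j})"
    using Delta_earlier_le_sum_later_before[OF sched pos, of j] j E_early E_order
    unfolding E_def L_def by simp
  moreover have "Sorig p j = Sorig p a + sum p {a..<j}"
    using a_job j by (intro Sorig_split) auto
  moreover have "S a - real (Sorig p a) \<le> Delta p S a"
    using a_job(1) by (rule Delta_ge_start_shift)
  ultimately show "Delta p S j < Delta p S a" using j a_job by linarith
qed

end
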